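(* Let $d\ge 2$, $N\ge 4$, $\ell>0$, and let $m\in\{2,\dots,[\frac{N}{2}]\}$. For an equilateral polygon $\mathcal{P}_N=\{y_1,\dots,y_N\}\subset\mathbb{R}^d$ with edge length $\ell$ let $\mathcal{D}_m(\mathcal{P}_N)$ denote the sum of lengths of all its $m$-diagonals, i.e. of the segments $[y_i,y_{i+m}]$. Then the property $(P_m)$ holds locally: there is a neighbourhood of the regular polygon $\tilde{\mathcal{P}}_N$ in the set of equilateral polygons in $\mathbb{R}^d$ with edge length $\ell$ such that $\mathcal{D}_m(\mathcal{P}_N)<\mathcal{D}_m(\tilde{\mathcal{P}}_N)$ for every $\mathcal{P}_N$ in this neighbourhood which is not a regular polygon (i.e. not the image of $\tilde{\mathcal{P}}_N$ under a Euclidean transformation).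
   Context: A polygon is identified with the ordered set of its vertices $\{y_1,\dots,y_N\}$, indices taken mod $N$; it is equilateral with edge length $\ell$ if $|y_{i+1}-y_i|=\ell$ for all $i$. The regular polygon $\tilde{\mathcal{P}}_N$ of edge length $\ell$ is the planar convex regular $N$-gon with consecutive vertices adjacent, lying on a circle of radius $\ell\,(2\sin\frac{\pi}{N})^{-1}$, determined up to Euclidean transformations. Property $(P_m)$: the quantity $\mathcal{D}_m$ is, in the set of equilateral polygons in $\mathbb{R}^d$ with fixed edge length $\ell$, uniquely maximized (up to Euclidean transformations) by the regular polygon. *)

theory Defs
  imports "HOL-Analysis.Analysis"
begin

text \<open>A polygon with N vertices in R^d is a map y :: nat => real^'d, of which only
the values y 0, ..., y (N-1) matter; indices are taken mod N.\<close>

definition equilateral_polygon :: "nat \<Rightarrow> real \<Rightarrow> (nat \<Rightarrow> real^'d) \<Rightarrow> bool" where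
  "equilateral_polygon N l y \<longleftrightarrow> (\<forall>i<N. dist (y i) (y ((i + 1) mod N)) = l)"

definition diag_sum :: "nat \<Rightarrow> nat \<Rightarrow> (nat \<Rightarrow> real^'d) \<Rightarrow> real" where
  "diag_sum N m y = (\<Sum>i<N. dist (y i) (y ((i + m) mod N)))"

definition euclidean_transformation :: "(real^'d \<Rightarrow> real^'d) \<Rightarrow> bool" where
  "euclidean_transformation f \<longleftrightarrow> (\<forall>x z. dist (f x) (f z) = dist x z)"

text \<open>The regular planar convex N-gon of edge length l (consecutive vertices adjacent),
placed in the plane through c spanned by the orthonormal vectors u, v; it lies on the circle
of radius l / (2 sin (pi/N)) around c.\<close>
definition regular_polygon :: "nat \<Rightarrow> real \<Rightarrow> (nat \<Rightarrow> real^'d) \<Rightarrow> bool" where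
  "regular_polygon N l y \<longleftrightarrow>
     (\<exists>c u v. norm u = 1 \<and> norm v = 1 \<and> inner u v = 0 \<and>
        (\<forall>i<N. y i = c + (l / (2 * sin (pi / real N))) *\<^sub>R
                   (cos (2 * pi * real i / real N) *\<^sub>R u + sin (2 * pi * real i / real N) *\<^sub>R v)))"

end

theory Submission
  imports Defs
begin

text \<open>
  Write e i = y (i + 1) - y i for the edges, so that the m-diagonal starting at y i is the
  cyclic window sum e i + ... + e (i + m - 1). Coordinatewise this window sum is a Fourier
  multiplier on the integers mod N with gain sin (m j \<pi> / N) / sin (j \<pi> / N) at frequency j.
  For 2 \<le> m \<le> N / 2 the modulus of the gain is largest exactly at j = \<plusminus>1, where it equals
  the ratio \<rho> of an m-diagonal to an edge of the regular N-gon. Since the edges of a closed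
  polygon sum to zero, Parseval bounds the sum of the squared diagonals by N (l \<rho>)^2, and
  Cauchy-Schwarz gives D_m \<le> N l \<rho>, the value for the regular polygon, for every equilateral
  polygon and not only near the regular one.

  In the case of equality all diagonals have length l \<rho> and the edges are pure first
  harmonics e i = cos (2 \<pi> i / N) A + sin (2 \<pi> i / N) B. Constant edge length then forces
  A \<bottom> B and |A| = |B| = l (for N = 4 the equal diagonals are needed as well), so the
  vertices lie on a circle and the polygon is regular, hence congruent to the given one.
\<close>

section \<open>The quotient sin (m t) / sin t\<close>

text \<open>Written as a cosine sum, the quotient has no singularity at t = 0 and is visibly
  decreasing in t as long as (m - 1) t \<le> \<pi>.\<close>

definition sin_ratio :: "nat \<Rightarrow> real \<Rightarrow> real" where
  "sin_ratio m t = (\<Sum>k<m. cos ((real m - 1 - 2 * real k) * t))"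

lemma sin_times_sin_ratio: "sin t * sin_ratio m t = sin (real m * t)"
proof -
  define f where "f k = sin ((real m - 2 * real k) * t)" for k
  have "f k - f (Suc k) = 2 * (sin t * cos ((real m - 1 - 2 * real k) * t))" for k
  proof -
    have "f k - f (Suc k) = 2 * sin (((real m - 2 * real k) * t - (real m - 2 * real (Suc k)) * t) / 2)
        * cos (((real m - 2 * real k) * t + (real m - 2 * real (Suc k)) * t) / 2)"
      unfolding f_def by (rule sin_diff_sin)
    also have "((real m - 2 * real k) * t - (real m - 2 * real (Suc k)) * t) / 2 = t"
      by (simp add: algebra_simps)
    also have "((real m - 2 * real k) * t + (real m - 2 * real (Suc k)) * t) / 2
        = (real m - 1 - 2 * real k) * t"
      by (simp add: field_simps)
    finally show ?thesis by simp
  qed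
  then have "2 * (sin t * sin_ratio m t) = (\<Sum>k<m. f k - f (Suc k))"
    by (simp add: sin_ratio_def sum_distrib_left)
  also have "\<dots> = f 0 - f m"
    by (rule sum_lessThan_telescope')
  also have "\<dots> = 2 * sin (real m * t)"
    by (simp add: f_def algebra_simps)
  finally show ?thesis by simp
qed

lemma sin_ratio_term_antimono:
  assumes "k < m" "0 \<le> s" "s \<le> t" "(real m - 1) * t \<le> pi"
  shows "cos ((real m - 1 - 2 * real k) * t) \<le> cos ((real m - 1 - 2 * real k) * s)"
proof -
  define c where "c = \<bar>real m - 1 - 2 * real k\<bar>"
  have "c \<le> real m - 1" using assms(1) unfolding c_def by auto
  then have "c * t \<le> pi"
    using assms by (meson c_def abs_ge_zero mult_right_mono order_trans)
  moreover have "0 \<le> c * s" "c * s \<le> c * t"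
    using assms by (simp_all add: c_def mult_left_mono)
  ultimately have "cos (c * t) \<le> cos (c * s)"
    by (subst cos_mono_le_eq) auto
  moreover have "cos (a * r) = cos (\<bar>a\<bar> * r)" for a r :: real
    by (cases "a \<ge> 0") (simp_all add: abs_if)
  ultimately show ?thesis
    unfolding c_def by metis
qed

lemma sin_ratio_antimono:
  assumes "0 \<le> s" "s \<le> t" "(real m - 1) * t \<le> pi"
  shows "sin_ratio m t \<le> sin_ratio m s"
  unfolding sin_ratio_def by (rule sum_mono) (use sin_ratio_term_antimono assms in auto)

lemma sin_ratio_strict_antimono:
  assumes "2 \<le> m" "0 \<le> s" "s < t" "(real m - 1) * t \<le> pi"
  shows "sin_ratio m t < sin_ratio m s"
  unfolding sin_ratio_def
proof (rule sum_strict_mono_ex1)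
  show "\<forall>k\<in>{..<m}. cos ((real m - 1 - 2 * real k) * t) \<le> cos ((real m - 1 - 2 * real k) * s)"
    using sin_ratio_term_antimono[of _ m s t] assms by auto
  have "0 \<le> (real m - 1) * s" "(real m - 1) * s < (real m - 1) * t"
    using assms by simp_all
  then have "cos ((real m - 1) * t) < cos ((real m - 1) * s)"
    using assms(4) by (subst cos_mono_less_eq) auto
  then show "\<exists>k\<in>{..<m}. cos ((real m - 1 - 2 * real k) * t) < cos ((real m - 1 - 2 * real k) * s)"
    using assms(1) by (intro bexI[of _ 0]) auto
qed simp

lemma abs_sin_mult_div_sin_less:
  assumes m: "2 \<le> m" and h: "0 < h" "h < x" and x: "x \<le> pi / 2" and mh: "real m * h \<le> pi / 2"
  shows "\<bar>sin (real m * x) / sin x\<bar> < sin (real m * h) / sin h"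
proof -
  have sin_h: "sin h > 0" and sin_x: "sin x > 0"
    using assms by (auto intro!: sin_gt_zero)
  have ratio_h: "sin_ratio m h = sin (real m * h) / sin h"
    using sin_times_sin_ratio[of h m] sin_h by (simp add: field_simps)
  have ratio_x: "sin_ratio m x = sin (real m * x) / sin x"
    using sin_times_sin_ratio[of x m] sin_x by (simp add: field_simps)
  show ?thesis
  proof (cases "real m * x \<le> pi")
    case True
    then have "0 \<le> sin (real m * x)"
      using h by (intro sin_ge_zero) auto
    moreover have "sin_ratio m x < sin_ratio m h"
      using True h by (intro sin_ratio_strict_antimono[OF m]) (auto simp: algebra_simps)
    ultimately show ?thesis
      using sin_x ratio_h ratio_x by simp
  next
    case False
    \<comment> \<open>Here only \<open>\<bar>sin (m x)\<bar> \<le> 1\<close> is used, against the value \<open>1 / sin p\<close> of the quotient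
      at its first peak \<open>p = \<pi> / (2 m)\<close>.\<close>
    define p where "p = pi / (2 * real m)"
    have "p < pi / real m" "pi / real m < x"
      using False m by (auto simp: p_def field_simps)
    then have "sin p < sin x"
      using m x by (subst sin_mono_less_eq) (auto simp: p_def)
    moreover have "sin p > 0"
      using m by (auto simp: p_def field_simps intro!: sin_gt_zero)
    moreover have "sin p * \<bar>sin (real m * x)\<bar> \<le> sin p"
      using \<open>sin p > 0\<close> abs_sin_le_one[of "real m * x"] by (simp add: mult_left_le)
    ultimately have "sin p * \<bar>sin (real m * x)\<bar> < sin x"
      by linarith
    then have "\<bar>sin (real m * x) / sin x\<bar> < 1 / sin p"
      using sin_x \<open>sin p > 0\<close> by (simp add: abs_divide field_simps)
    also have "1 / sin p = sin_ratio m p"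
      using sin_times_sin_ratio[of p m] \<open>sin p > 0\<close> m by (simp add: p_def field_simps)
    also have "\<dots> \<le> sin_ratio m h"
      using h mh m by (intro sin_ratio_antimono) (auto simp: p_def field_simps)
    finally show ?thesis
      using ratio_h by simp
  qed
qed

section \<open>Discrete Fourier transform\<close>

definition unity_root :: "nat \<Rightarrow> complex" where
  "unity_root N = cis (2 * pi / real N)"

lemma unity_root_pow: "unity_root N ^ k = cis (2 * pi * real k / real N)"
proof -
  have "unity_root N ^ k = cis (real k * (2 * pi / real N))"
    unfolding unity_root_def by (rule Complex.DeMoivre)
  then show ?thesis
    by (simp add: mult.commute)
qed

lemma norm_unity_root_pow [simp]: "norm (unity_root N ^ k) = 1"
  by (simp add: unity_root_pow)

lemma cnj_unity_root_pow_mult [simp]: "cnj (unity_root N ^ k) * unity_root N ^ k = 1"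
  by (metis complex_norm_square mult.commute norm_unity_root_pow one_power2 of_real_1)

lemma unity_root_pow_self: "0 < N \<Longrightarrow> unity_root N ^ N = 1"
  by (simp add: unity_root_pow)

lemma unity_root_pow_mod: "0 < N \<Longrightarrow> unity_root N ^ (k mod N) = unity_root N ^ k"
  by (metis div_mult_mod_eq mult.commute mult_1 power_add power_mult power_one unity_root_pow_self)

lemma unity_root_pow_eq_iff:
  assumes "i < N" "k < N"
  shows "unity_root N ^ i = unity_root N ^ k \<longleftrightarrow> i = k"
  using bij_betw_imp_inj_on[OF Complex.bij_betw_roots_unity, of N] assms
  by (auto simp: unity_root_pow inj_on_def)

lemma unity_root_pow_eq_1_iff:
  assumes "0 < N"
  shows "unity_root N ^ k = 1 \<longleftrightarrow> N dvd k"
  using unity_root_pow_eq_iff[of "k mod N" N 0] assms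
  by (simp add: unity_root_pow_mod dvd_eq_mod_eq_0)

lemma unity_root_pow_complement:
  assumes "0 < N" "j \<le> N"
  shows "unity_root N ^ (i * (N - j)) = cnj (unity_root N ^ (i * j))"
proof -
  have "i * (N - j) + i * j = N * i"
    using assms(2) by (simp add: diff_mult_distrib2 mult.commute)
  then have "unity_root N ^ (i * (N - j)) * unity_root N ^ (i * j) = (unity_root N ^ N) ^ i"
    by (simp flip: power_add power_mult)
  also have "\<dots> = cnj (unity_root N ^ (i * j)) * unity_root N ^ (i * j)"
    using assms by (simp add: unity_root_pow_self del: complex_cnj_power)
  moreover have "unity_root N ^ (i * j) \<noteq> 0"
    by (metis norm_unity_root_pow norm_zero zero_neq_one)
  ultimately show ?thesis
    by (metis mult_right_cancel)
qed

lemma sum_powers_root_of_unity: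
  fixes z :: complex
  assumes "z ^ N = 1"
  shows "(\<Sum>j<N. z ^ j) = (if z = 1 then of_nat N else 0)"
  using assms by (simp add: sum_gp_strict)

lemma unity_root_orthogonal:
  assumes "i < N" "k < N"
  shows "(\<Sum>j<N. unity_root N ^ (k * j) * cnj (unity_root N ^ (i * j)))
         = (if i = k then of_nat N else 0)"
proof -
  define z where "z = unity_root N ^ k * cnj (unity_root N ^ i)"
  have z_pow: "z ^ j = unity_root N ^ (k * j) * cnj (unity_root N ^ (i * j))" for j
    by (simp add: z_def power_mult_distrib power_mult)
  have "unity_root N ^ (a * N) = (unity_root N ^ N) ^ a" for a
    by (simp only: power_mult[symmetric] mult.commute)
  then have "unity_root N ^ (a * N) = 1" for a
    using assms by (simp add: unity_root_pow_self)
  then have "z ^ N = 1"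
    unfolding z_pow by simp
  moreover have "z = 1 \<longleftrightarrow> unity_root N ^ k = unity_root N ^ i"
    by (metis z_def cnj_unity_root_pow_mult mult.assoc mult.right_neutral mult.commute)
  ultimately show ?thesis
    using sum_powers_root_of_unity[of z N] assms unity_root_pow_eq_iff[of k N i]
    by (auto simp: z_pow)
qed

lemma sum_cis_multiple_eq_0:
  assumes "0 < N" "\<not> N dvd k"
  shows "(\<Sum>i<N. cis (real k * (2 * pi * real i / real N))) = 0"
proof -
  have pow: "cis (real k * (2 * pi * real i / real N)) = (unity_root N ^ k) ^ i" for i
    unfolding power_mult[symmetric] unfolding unity_root_pow by (simp add: mult_ac)
  have "(unity_root N ^ k) ^ N = (unity_root N ^ N) ^ k"
    by (simp only: power_mult[symmetric] mult.commute)
  then have root: "(unity_root N ^ k) ^ N = 1"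
    using assms(1) by (simp add: unity_root_pow_self)
  have "unity_root N ^ k \<noteq> 1"
    using unity_root_pow_eq_1_iff[OF assms(1)] assms(2) by simp
  then show ?thesis
    unfolding pow using sum_powers_root_of_unity[OF root] by simp
qed

lemma sum_cos_sin_multiple_eq_0:
  assumes "0 < N" "\<not> N dvd k"
  shows "(\<Sum>i<N. cos (real k * (2 * pi * real i / real N))) = 0"
    and "(\<Sum>i<N. sin (real k * (2 * pi * real i / real N))) = 0"
  using arg_cong[OF sum_cis_multiple_eq_0[OF assms], of Re] arg_cong[OF sum_cis_multiple_eq_0[OF assms], of Im]
  by (simp_all add: Re_sum Im_sum)

lemma sum_mod_shift:
  fixes N k :: nat
  shows "(\<Sum>i<N. g ((i + k) mod N)) = (\<Sum>i<N. g i)"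
proof -
  have inj: "inj_on (\<lambda>i. (i + k) mod N) {..<N}"
  proof
    fix i j assume ij: "i \<in> {..<N}" "j \<in> {..<N}" and "(i + k) mod N = (j + k) mod N"
    then have "(int i + int k) mod int N = (int j + int k) mod int N"
      by (metis of_nat_add of_nat_mod)
    then have "(int i + int k - int k) mod int N = (int j + int k - int k) mod int N"
      by (rule mod_diff_cong) simp
    then show "i = j"
      using ij by (simp add: zmod_int)
  qed
  then have "(\<lambda>i. (i + k) mod N) ` {..<N} = {..<N}"
    by (intro endo_inj_surj) auto
  then show ?thesis
    using sum.reindex[OF inj, of g] by simp
qed

definition dft :: "nat \<Rightarrow> (nat \<Rightarrow> complex) \<Rightarrow> nat \<Rightarrow> complex" where
  "dft N x j = (\<Sum>i<N. x i * unity_root N ^ (i * j))"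

lemma dft_inversion:
  assumes "i < N"
  shows "(\<Sum>j<N. dft N x j * cnj (unity_root N ^ (i * j))) = of_nat N * x i"
proof -
  have "(\<Sum>j<N. dft N x j * cnj (unity_root N ^ (i * j)))
      = (\<Sum>k<N. x k * (\<Sum>j<N. unity_root N ^ (k * j) * cnj (unity_root N ^ (i * j))))"
    unfolding dft_def sum_distrib_right mult.assoc by (subst sum.swap) (simp only: sum_distrib_left)
  also have "\<dots> = (\<Sum>k<N. x k * (if i = k then of_nat N else 0))"
    using assms by (intro sum.cong refl) (simp add: unity_root_orthogonal del: complex_cnj_power)
  also have "\<dots> = of_nat N * x i"
    using assms by (simp add: if_distrib cong: if_cong)
  finally show ?thesis .
qed

lemma dft_parseval: "(\<Sum>j<N. (norm (dft N x j))\<^sup>2) = real N * (\<Sum>i<N. (norm (x i))\<^sup>2)"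
proof -
  have "complex_of_real (\<Sum>j<N. (norm (dft N x j))\<^sup>2) = (\<Sum>j<N. dft N x j * cnj (dft N x j))"
    by (simp only: of_real_sum complex_norm_square)
  also have "\<dots> = (\<Sum>j<N. \<Sum>i<N. cnj (x i) * (dft N x j * cnj (unity_root N ^ (i * j))))"
    unfolding dft_def[of N x j for j] cnj_sum complex_cnj_mult sum_distrib_left
    by (simp add: mult_ac del: complex_cnj_power)
  also have "\<dots> = (\<Sum>i<N. cnj (x i) * (\<Sum>j<N. dft N x j * cnj (unity_root N ^ (i * j))))"
    by (subst sum.swap) (simp add: sum_distrib_left)
  also have "\<dots> = (\<Sum>i<N. of_nat N * (x i * cnj (x i)))"
    by (intro sum.cong refl) (simp add: dft_inversion del: complex_cnj_power)
  also have "\<dots> = complex_of_real (real N * (\<Sum>i<N. (norm (x i))\<^sup>2))"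
    by (simp only: of_real_mult of_real_sum of_real_of_nat_eq complex_norm_square sum_distrib_left)
  finally show ?thesis
    using of_real_eq_iff by blast
qed

lemma dft_shift:
  assumes "0 < N"
  shows "dft N (\<lambda>i. x ((i + k) mod N)) j = cnj (unity_root N ^ (k * j)) * dft N x j"
proof -
  have shift: "unity_root N ^ (((i + k) mod N) * j) = unity_root N ^ (i * j) * unity_root N ^ (k * j)"
    for i
  proof -
    have "unity_root N ^ (((i + k) mod N) * j) = unity_root N ^ ((i + k) * j)"
      by (metis assms mod_mult_left_eq unity_root_pow_mod)
    then show ?thesis
      by (simp add: distrib_right power_add)
  qed
  have "cnj (unity_root N ^ (k * j)) * dft N x j
      = (\<Sum>i<N. x ((i + k) mod N) * unity_root N ^ (((i + k) mod N) * j)) * cnj (unity_root N ^ (k * j))"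
    using sum_mod_shift[where g = "\<lambda>i. x i * unity_root N ^ (i * j)" and N = N and k = k]
    by (simp add: dft_def mult.commute[of "cnj _"])
  also have "\<dots> = (\<Sum>i<N. x ((i + k) mod N) * unity_root N ^ (i * j)
                       * (cnj (unity_root N ^ (k * j)) * unity_root N ^ (k * j)))"
    unfolding shift sum_distrib_right by (intro sum.cong refl) (simp only: mult_ac)
  also have "\<dots> = dft N (\<lambda>i. x ((i + k) mod N)) j"
    by (simp add: dft_def del: complex_cnj_power)
  finally show ?thesis
    by (rule sym)
qed

lemma dft_first_harmonic:
  assumes "2 < N" and vanish: "\<And>j. j < N \<Longrightarrow> j \<noteq> 1 \<Longrightarrow> j \<noteq> N - 1 \<Longrightarrow> dft N x j = 0"
  shows "\<exists>a b. \<forall>i<N. x i = cos (2 * pi * real i / real N) *\<^sub>R a + sin (2 * pi * real i / real N) *\<^sub>R b"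
proof (intro exI allI impI)
  define X1 where "X1 = dft N x 1"
  define X2 where "X2 = dft N x (N - 1)"
  fix i assume i: "i < N"
  define t where "t = 2 * pi * real i / real N"
  have "of_nat N * x i = (\<Sum>j<N. dft N x j * cnj (unity_root N ^ (i * j)))"
    using dft_inversion[OF i] by simp
  also have "\<dots> = (\<Sum>j\<in>{1, N - 1}. dft N x j * cnj (unity_root N ^ (i * j)))"
    using assms by (intro sum.mono_neutral_right) auto
  also have "\<dots> = X1 * cnj (unity_root N ^ i) + X2 * unity_root N ^ i"
    using assms unity_root_pow_complement[of N 1 i] by (simp add: X1_def X2_def del: complex_cnj_power)
  also have "\<dots> = cos t *\<^sub>R (X1 + X2) + sin t *\<^sub>R (\<i> * (X2 - X1))"
  proof -
    have "unity_root N ^ i = complex_of_real (cos t) + \<i> * complex_of_real (sin t)"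
      by (simp add: unity_root_pow t_def cis.ctr Complex_eq)
    then show ?thesis
      by (simp add: scaleR_conv_of_real algebra_simps del: complex_cnj_power)
  qed
  finally have eq: "of_nat N * x i = cos t *\<^sub>R (X1 + X2) + sin t *\<^sub>R (\<i> * (X2 - X1))" .
  have "x i = (of_nat N * x i) / of_nat N"
    using assms by simp
  also have "\<dots> = cos t *\<^sub>R ((X1 + X2) / of_nat N) + sin t *\<^sub>R (\<i> * (X2 - X1) / of_nat N)"
    unfolding eq using assms by (simp add: scaleR_conv_of_real field_simps)
  finally show "x i = cos t *\<^sub>R ((X1 + X2) / of_nat N) + sin t *\<^sub>R (\<i> * (X2 - X1) / of_nat N)" .
qed

section \<open>Cyclic window sums\<close>

definition window_sum :: "nat \<Rightarrow> nat \<Rightarrow> (nat \<Rightarrow> 'a::comm_monoid_add) \<Rightarrow> nat \<Rightarrow> 'a" where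
  "window_sum N m x i = (\<Sum>k<m. x ((i + k) mod N))"

definition window_gain :: "nat \<Rightarrow> nat \<Rightarrow> nat \<Rightarrow> complex" where
  "window_gain N m j = (\<Sum>k<m. unity_root N ^ (k * j))"

lemma dft_window_sum:
  assumes "0 < N"
  shows "dft N (window_sum N m x) j = cnj (window_gain N m j) * dft N x j"
proof -
  have "dft N (window_sum N m x) j = (\<Sum>k<m. dft N (\<lambda>i. x ((i + k) mod N)) j)"
    unfolding dft_def window_sum_def sum_distrib_right by (rule sum.swap)
  also have "\<dots> = (\<Sum>k<m. cnj (unity_root N ^ (k * j)) * dft N x j)"
    using dft_shift[OF assms] by simp
  finally show ?thesis
    by (simp add: window_gain_def sum_distrib_right del: complex_cnj_power)
qed

lemma norm_one_minus_cis_sq: "(norm (1 - cis a))\<^sup>2 = 4 * (sin (a / 2))\<^sup>2"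
proof -
  have "(norm (1 - cis a))\<^sup>2 = (1 - cos a)\<^sup>2 + (sin a)\<^sup>2"
    by (simp add: cmod_power2)
  also have "\<dots> = 2 - 2 * cos a"
    by (simp add: power2_diff algebra_simps)
  also have "cos a = 1 - 2 * (sin (a / 2))\<^sup>2"
    using cos_double_sin[of "a / 2"] by simp
  finally show ?thesis
    by simp
qed

lemma norm_window_gain_sq:
  "(norm (window_gain N m j))\<^sup>2 * (sin (real j * pi / real N))\<^sup>2 = (sin (real m * real j * pi / real N))\<^sup>2"
proof -
  define z where "z = unity_root N ^ j"
  have "window_gain N m j = (\<Sum>k<m. z ^ k)"
    unfolding window_gain_def z_def by (simp only: power_mult[symmetric] mult.commute)
  then have "(1 - z) * window_gain N m j = 1 - z ^ m"
    by (simp add: one_diff_power_eq)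
  then have "(norm (1 - z))\<^sup>2 * (norm (window_gain N m j))\<^sup>2 = (norm (1 - z ^ m))\<^sup>2"
    by (metis norm_mult power_mult_distrib)
  moreover have "z ^ m = unity_root N ^ (j * m)"
    unfolding z_def by (simp only: power_mult)
  then have "z = cis (2 * (real j * pi / real N))" "z ^ m = cis (2 * (real m * real j * pi / real N))"
    by (simp_all add: z_def unity_root_pow field_simps)
  ultimately show ?thesis
    by (simp add: norm_one_minus_cis_sq mult.commute)
qed

text \<open>The ratio of an m-diagonal to an edge of the regular N-gon; it is also the largest modulus
  of the window gain at a nonzero frequency.\<close>

definition diagonal_ratio :: "nat \<Rightarrow> nat \<Rightarrow> real" where
  "diagonal_ratio N m = sin (real m * pi / real N) / sin (pi / real N)"

lemma diagonal_ratio_pos: "0 < m \<Longrightarrow> m < N \<Longrightarrow> 0 < diagonal_ratio N m"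
  unfolding diagonal_ratio_def by (intro divide_pos_pos sin_gt_zero) (auto simp: field_simps)

lemma window_gain_complement:
  assumes "0 < N" "j \<le> N"
  shows "window_gain N m (N - j) = cnj (window_gain N m j)"
  unfolding window_gain_def cnj_sum using unity_root_pow_complement[OF assms] by simp

lemma norm_window_gain_le:
  assumes m: "2 \<le> m" "2 * m \<le> N" and j: "0 < j" "j < N"
  shows "norm (window_gain N m j) \<le> diagonal_ratio N m"
    and "2 \<le> j \<Longrightarrow> j + 2 \<le> N \<Longrightarrow> norm (window_gain N m j) < diagonal_ratio N m"
proof -
  have lower_half: "norm (window_gain N m k) \<le> diagonal_ratio N m
      \<and> (2 \<le> k \<longrightarrow> norm (window_gain N m k) < diagonal_ratio N m)" if k: "0 < k" "2 * k \<le> N" for k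
  proof -
    define x where "x = real k * pi / real N"
    define h where "h = pi / real N"
    have x: "0 < x" "x \<le> pi / 2" "h \<le> x" "2 \<le> k \<Longrightarrow> h < x"
      using k by (auto simp: x_def h_def field_simps)
    have "0 < sin x"
      using x by (intro sin_gt_zero) auto
    then have "(norm (window_gain N m k))\<^sup>2 = (sin (real m * x) / sin x)\<^sup>2"
      using norm_window_gain_sq[of N m k] by (simp add: x_def field_simps)
    then have gain: "norm (window_gain N m k) = \<bar>sin (real m * x) / sin x\<bar>"
      by (metis norm_ge_zero real_sqrt_abs real_sqrt_unique)
    have ratio: "diagonal_ratio N m = sin (real m * h) / sin h"
      by (simp add: diagonal_ratio_def h_def)
    have "0 < h" "real m * h \<le> pi / 2"
      using m by (simp_all add: h_def field_simps)
    then have "norm (window_gain N m k) < diagonal_ratio N m" if "h < x"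
      using abs_sin_mult_div_sin_less[OF m(1) _ that] x gain ratio by simp
    moreover have "norm (window_gain N m k) = diagonal_ratio N m" if "h = x"
    proof -
      have "0 < diagonal_ratio N m"
        using m by (intro diagonal_ratio_pos) auto
      then show ?thesis
        using gain ratio that by (metis abs_of_pos)
    qed
    ultimately show ?thesis
      using x by fastforce
  qed
  show "norm (window_gain N m j) \<le> diagonal_ratio N m"
    and "2 \<le> j \<Longrightarrow> j + 2 \<le> N \<Longrightarrow> norm (window_gain N m j) < diagonal_ratio N m"
  proof (atomize (full), cases "2 * j \<le> N")
    case False
    have "norm (window_gain N m j) = norm (window_gain N m (N - j))"
      using window_gain_complement[of N j m] j by simp
    then show "norm (window_gain N m j) \<le> diagonal_ratio N m
        \<and> (2 \<le> j \<longrightarrow> j + 2 \<le> N \<longrightarrow> norm (window_gain N m j) < diagonal_ratio N m)"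
      using lower_half[of "N - j"] False j by auto
  qed (use lower_half j in auto)
qed

lemma window_sum_spectral:
  assumes "0 < N"
  shows "real N * (\<Sum>i<N. (norm (window_sum N m x i))\<^sup>2)
       = (\<Sum>j<N. (norm (window_gain N m j))\<^sup>2 * (norm (dft N x j))\<^sup>2)"
  using dft_parseval[of N "window_sum N m x"]
  by (simp add: dft_window_sum[OF assms] norm_mult power_mult_distrib)

lemma window_sum_deficit:
  assumes "0 < N"
  shows "real N * (\<rho>\<^sup>2 * (\<Sum>i<N. (norm (x i))\<^sup>2) - (\<Sum>i<N. (norm (window_sum N m x i))\<^sup>2))
       = (\<Sum>j<N. (\<rho>\<^sup>2 - (norm (window_gain N m j))\<^sup>2) * (norm (dft N x j))\<^sup>2)"
proof -
  have "real N * (\<rho>\<^sup>2 * (\<Sum>i<N. (norm (x i))\<^sup>2)) = \<rho>\<^sup>2 * (\<Sum>j<N. (norm (dft N x j))\<^sup>2)"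
    by (simp only: dft_parseval mult.left_commute)
  also have "\<dots> = (\<Sum>j<N. \<rho>\<^sup>2 * (norm (dft N x j))\<^sup>2)"
    by (rule sum_distrib_left)
  finally have parseval_\<rho>: "real N * (\<rho>\<^sup>2 * (\<Sum>i<N. (norm (x i))\<^sup>2))
                            = (\<Sum>j<N. \<rho>\<^sup>2 * (norm (dft N x j))\<^sup>2)" .
  show ?thesis
    unfolding right_diff_distrib window_sum_spectral[OF assms] parseval_\<rho> left_diff_distrib sum_subtractf ..
qed

lemma window_sum_norm_sq_le:
  fixes x :: "nat \<Rightarrow> complex"
  assumes m: "2 \<le> m" "2 * m \<le> N" and mean: "(\<Sum>i<N. x i) = 0"
  shows "(\<Sum>i<N. (norm (window_sum N m x i))\<^sup>2) \<le> (diagonal_ratio N m)\<^sup>2 * (\<Sum>i<N. (norm (x i))\<^sup>2)"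
    and "(diagonal_ratio N m)\<^sup>2 * (\<Sum>i<N. (norm (x i))\<^sup>2) \<le> (\<Sum>i<N. (norm (window_sum N m x i))\<^sup>2)
         \<Longrightarrow> \<exists>a b. \<forall>i<N. x i = cos (2 * pi * real i / real N) *\<^sub>R a + sin (2 * pi * real i / real N) *\<^sub>R b"
proof -
  define \<rho> where "\<rho> = diagonal_ratio N m"
  define \<delta> where "\<delta> j = (\<rho>\<^sup>2 - (norm (window_gain N m j))\<^sup>2) * (norm (dft N x j))\<^sup>2" for j
  have N: "0 < N"
    using m by simp
  have dft_0: "dft N x 0 = 0"
    using mean by (simp add: dft_def)
  have gain_le: "(norm (window_gain N m j))\<^sup>2 \<le> \<rho>\<^sup>2" if "0 < j" "j < N" for j
    using norm_window_gain_le(1)[OF m that] unfolding \<rho>_def by (simp add: power_mono)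
  have \<delta>_nonneg: "0 \<le> \<delta> j" if "j < N" for j
    using gain_le[of j] that dft_0 by (cases "j = 0") (simp_all add: \<delta>_def)
  have deficit: "real N * (\<rho>\<^sup>2 * (\<Sum>i<N. (norm (x i))\<^sup>2) - (\<Sum>i<N. (norm (window_sum N m x i))\<^sup>2))
               = (\<Sum>j<N. \<delta> j)"
    unfolding \<delta>_def by (rule window_sum_deficit[OF N])
  have sum_\<delta>_nonneg: "0 \<le> (\<Sum>j<N. \<delta> j)"
    using \<delta>_nonneg by (auto intro: sum_nonneg)
  then show "(\<Sum>i<N. (norm (window_sum N m x i))\<^sup>2) \<le> \<rho>\<^sup>2 * (\<Sum>i<N. (norm (x i))\<^sup>2)"
    using N unfolding deficit[symmetric] by (simp add: zero_le_mult_iff)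
  assume "\<rho>\<^sup>2 * (\<Sum>i<N. (norm (x i))\<^sup>2) \<le> (\<Sum>i<N. (norm (window_sum N m x i))\<^sup>2)"
  then have "(\<Sum>j<N. \<delta> j) \<le> 0"
    unfolding deficit[symmetric] using N by (simp add: mult_le_0_iff)
  then have "(\<Sum>j<N. \<delta> j) = 0"
    using sum_\<delta>_nonneg by linarith
  then have \<delta>_0: "\<delta> j = 0" if "j < N" for j
    using sum_nonneg_eq_0_iff[of "{..<N}" \<delta>] \<delta>_nonneg that by simp
  show "\<exists>a b. \<forall>i<N. x i = cos (2 * pi * real i / real N) *\<^sub>R a + sin (2 * pi * real i / real N) *\<^sub>R b"
  proof (rule dft_first_harmonic)
    show "2 < N"
      using m by simp
    fix j assume j: "j < N" "j \<noteq> 1" "j \<noteq> N - 1"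
    show "dft N x j = 0"
    proof (cases "j = 0")
      case False
      then have "(norm (window_gain N m j))\<^sup>2 < \<rho>\<^sup>2"
        using norm_window_gain_le(2)[OF m, of j] j unfolding \<rho>_def
        by (intro power_strict_mono) auto
      then show ?thesis
        using \<delta>_0[OF j(1)] by (simp add: \<delta>_def)
    qed (simp add: dft_0)
  qed
qed

lemma norm_sq_eq_sum_Basis: "(norm v)\<^sup>2 = (\<Sum>b\<in>Basis. (v \<bullet> b)\<^sup>2)"
  unfolding power2_norm_eq_inner euclidean_inner[of v v] by (simp add: power2_eq_square)

lemma window_sum_norm_sq_le_euclidean:
  fixes e :: "nat \<Rightarrow> 'a::euclidean_space"
  assumes m: "2 \<le> m" "2 * m \<le> N" and mean: "(\<Sum>i<N. e i) = 0"
  shows "(\<Sum>i<N. (norm (window_sum N m e i))\<^sup>2) \<le> (diagonal_ratio N m)\<^sup>2 * (\<Sum>i<N. (norm (e i))\<^sup>2)"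
    and "(diagonal_ratio N m)\<^sup>2 * (\<Sum>i<N. (norm (e i))\<^sup>2) \<le> (\<Sum>i<N. (norm (window_sum N m e i))\<^sup>2)
         \<Longrightarrow> \<exists>A B. \<forall>i<N. e i = cos (2 * pi * real i / real N) *\<^sub>R A + sin (2 * pi * real i / real N) *\<^sub>R B"
proof -
  define \<rho> where "\<rho> = diagonal_ratio N m"
  define x where "x b i = complex_of_real (e i \<bullet> b)" for b i
  define W where "W b = (\<Sum>i<N. (norm (window_sum N m (x b) i))\<^sup>2)" for b
  define S where "S b = (\<Sum>i<N. (norm (x b i))\<^sup>2)" for b
  have mean_x: "(\<Sum>i<N. x b i) = 0" for b
    using mean by (simp add: x_def flip: of_real_sum inner_sum_left)
  have W_le: "W b \<le> \<rho>\<^sup>2 * S b" for b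
    unfolding W_def S_def \<rho>_def by (rule window_sum_norm_sq_le(1)[OF m mean_x])
  have "norm (window_sum N m (x b) i) = \<bar>window_sum N m e i \<bullet> b\<bar>" for b i
    by (simp add: x_def window_sum_def inner_sum_left flip: of_real_sum)
  then have window_eq: "(\<Sum>i<N. (norm (window_sum N m e i))\<^sup>2) = (\<Sum>b\<in>Basis. W b)"
    unfolding W_def norm_sq_eq_sum_Basis[of "window_sum N m e _"] by (subst sum.swap) simp
  have norm_eq: "(\<Sum>i<N. (norm (e i))\<^sup>2) = (\<Sum>b\<in>Basis. S b)"
    unfolding S_def norm_sq_eq_sum_Basis[of "e _"] by (subst sum.swap) (simp add: x_def)
  show "(\<Sum>i<N. (norm (window_sum N m e i))\<^sup>2) \<le> \<rho>\<^sup>2 * (\<Sum>i<N. (norm (e i))\<^sup>2)"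
    unfolding window_eq norm_eq sum_distrib_left by (rule sum_mono) (rule W_le)
  assume "\<rho>\<^sup>2 * (\<Sum>i<N. (norm (e i))\<^sup>2) \<le> (\<Sum>i<N. (norm (window_sum N m e i))\<^sup>2)"
  then have "(\<Sum>b\<in>Basis. \<rho>\<^sup>2 * S b - W b) \<le> 0"
    unfolding window_eq norm_eq sum_distrib_left sum_subtractf by simp
  then have "\<forall>b\<in>Basis. \<rho>\<^sup>2 * S b - W b = 0"
    using sum_nonneg_eq_0_iff[of Basis "\<lambda>b. \<rho>\<^sup>2 * S b - W b"] W_le
    by (simp add: sum_nonneg antisym)
  then have "\<forall>b\<in>Basis. \<exists>a c. \<forall>i<N. x b i = cos (2 * pi * real i / real N) *\<^sub>R a + sin (2 * pi * real i / real N) *\<^sub>R c"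
    using window_sum_norm_sq_le(2)[OF m mean_x] unfolding W_def S_def \<rho>_def by simp
  then obtain a c where ac: "\<And>b i. b \<in> Basis \<Longrightarrow> i < N \<Longrightarrow>
      x b i = cos (2 * pi * real i / real N) *\<^sub>R a b + sin (2 * pi * real i / real N) *\<^sub>R c b"
    by metis
  show "\<exists>A B. \<forall>i<N. e i = cos (2 * pi * real i / real N) *\<^sub>R A + sin (2 * pi * real i / real N) *\<^sub>R B"
  proof (intro exI allI impI)
    fix i assume "i < N"
    define t where "t = 2 * pi * real i / real N"
    have "e i \<bullet> b = cos t * Re (a b) + sin t * Re (c b)" if "b \<in> Basis" for b
      using arg_cong[OF ac[OF that \<open>i < N\<close>], of Re] by (simp add: x_def t_def)
    then have "e i = (\<Sum>b\<in>Basis. (cos t * Re (a b) + sin t * Re (c b)) *\<^sub>R b)"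
      by (metis (no_types, lifting) euclidean_representation sum.cong)
    then show "e i = cos t *\<^sub>R (\<Sum>b\<in>Basis. Re (a b) *\<^sub>R b) + sin t *\<^sub>R (\<Sum>b\<in>Basis. Re (c b) *\<^sub>R b)"
      by (simp add: scaleR_sum_right scaleR_add_left sum.distrib)
  qed
qed

section \<open>Equilateral polygons of maximal diagonal sum\<close>

lemma sum_cyclic_differences:
  fixes y :: "nat \<Rightarrow> 'a::ab_group_add"
  shows "(\<Sum>i<N. y ((i + 1) mod N) - y i) = 0"
  using sum_mod_shift[where g = y and N = N and k = 1] by (simp add: sum_subtractf)

lemma window_sum_cyclic_differences:
  fixes y :: "nat \<Rightarrow> 'a::ab_group_add"
  assumes "i < N"
  shows "window_sum N m (\<lambda>i. y ((i + 1) mod N) - y i) i = y ((i + m) mod N) - y i"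
proof -
  have "((i + k) mod N + 1) mod N = (i + Suc k) mod N" for k
    by (simp add: mod_Suc_eq)
  then have "window_sum N m (\<lambda>i. y ((i + 1) mod N) - y i) i
      = (\<Sum>k<m. y ((i + Suc k) mod N) - y ((i + k) mod N))"
    by (simp add: window_sum_def)
  also have "\<dots> = y ((i + m) mod N) - y i"
    using sum_lessThan_telescope[of "\<lambda>k. y ((i + k) mod N)" m] assms by simp
  finally show ?thesis .
qed

lemma eq_const_if_sum_ge_and_sum_sq_le:
  fixes d :: "'a \<Rightarrow> real"
  assumes "finite I" "0 \<le> c" "real (card I) * c \<le> (\<Sum>i\<in>I. d i)"
    "(\<Sum>i\<in>I. (d i)\<^sup>2) \<le> real (card I) * c\<^sup>2"
    and "i \<in> I"
  shows "d i = c"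
proof -
  have "(\<Sum>i\<in>I. (d i - c)\<^sup>2) = (\<Sum>i\<in>I. (d i)\<^sup>2 - 2 * c * d i + c\<^sup>2)"
    by (intro sum.cong refl) (simp add: power2_diff)
  also have "\<dots> = (\<Sum>i\<in>I. (d i)\<^sup>2) - 2 * c * (\<Sum>i\<in>I. d i) + real (card I) * c\<^sup>2"
    by (simp add: sum.distrib sum_subtractf sum_distrib_left)
  also have "\<dots> \<le> 0"
  proof -
    have "real (card I) * c\<^sup>2 \<le> c * (\<Sum>i\<in>I. d i)"
      using mult_left_mono[OF assms(3,2)] by (simp add: power2_eq_square mult_ac)
    then show ?thesis
      using assms(4) by linarith
  qed
  finally have "(\<Sum>i\<in>I. (d i - c)\<^sup>2) = 0"
    by (simp add: antisym sum_nonneg)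
  then show ?thesis
    using assms(1,5) by (simp add: sum_nonneg_eq_0_iff)
qed

lemma max_diag_sum_imp_first_harmonic_edges:
  fixes y :: "nat \<Rightarrow> real^'d"
  assumes m: "2 \<le> m" "2 * m \<le> N" and l: "0 \<le> l" and y: "equilateral_polygon N l y"
    and max: "real N * l * diagonal_ratio N m \<le> diag_sum N m y"
  shows "\<And>i. i < N \<Longrightarrow> dist (y i) (y ((i + m) mod N)) = l * diagonal_ratio N m"
    and "\<exists>A B. \<forall>i<N. y ((i + 1) mod N) - y i
                      = cos (2 * pi * real i / real N) *\<^sub>R A + sin (2 * pi * real i / real N) *\<^sub>R B"
proof -
  define \<rho> where "\<rho> = diagonal_ratio N m"
  define e where "e i = y ((i + 1) mod N) - y i" for i
  define d where "d i = dist (y i) (y ((i + m) mod N))" for i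
  have \<rho>: "0 < \<rho>"
    using m unfolding \<rho>_def by (intro diagonal_ratio_pos) auto
  have norm_e: "(\<Sum>i<N. (norm (e i))\<^sup>2) = real N * l\<^sup>2"
    using y by (simp add: equilateral_polygon_def e_def dist_norm norm_minus_commute)
  have d_window: "d i = norm (window_sum N m e i)" if "i < N" for i
    unfolding d_def e_def window_sum_cyclic_differences[OF that] by (simp add: dist_norm norm_minus_commute)
  have mean_e: "(\<Sum>i<N. e i) = 0"
    unfolding e_def by (rule sum_cyclic_differences)
  have sum_d_sq: "(\<Sum>i<N. (d i)\<^sup>2) = (\<Sum>i<N. (norm (window_sum N m e i))\<^sup>2)"
    by (simp add: d_window)
  have "(\<Sum>i<N. (d i)\<^sup>2) \<le> real (card {..<N}) * (l * \<rho>)\<^sup>2"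
    using window_sum_norm_sq_le_euclidean(1)[OF m mean_e] unfolding sum_d_sq norm_e \<rho>_def
    by (simp add: power_mult_distrib mult_ac)
  moreover have "real (card {..<N}) * (l * \<rho>) \<le> (\<Sum>i<N. d i)"
    using max by (simp add: diag_sum_def d_def \<rho>_def mult_ac)
  ultimately have d_const: "d i = l * \<rho>" if "i < N" for i
    using l \<rho> that by (intro eq_const_if_sum_ge_and_sum_sq_le[where I = "{..<N}" and d = d]) auto
  then show "\<And>i. i < N \<Longrightarrow> dist (y i) (y ((i + m) mod N)) = l * diagonal_ratio N m"
    by (simp add: d_def \<rho>_def)
  have "\<rho>\<^sup>2 * (\<Sum>i<N. (norm (e i))\<^sup>2) \<le> (\<Sum>i<N. (norm (window_sum N m e i))\<^sup>2)"
    unfolding norm_e sum_d_sq[symmetric] by (simp add: d_const power_mult_distrib)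
  then show "\<exists>A B. \<forall>i<N. y ((i + 1) mod N) - y i
                      = cos (2 * pi * real i / real N) *\<^sub>R A + sin (2 * pi * real i / real N) *\<^sub>R B"
    using window_sum_norm_sq_le_euclidean(2)[OF m mean_e] unfolding \<rho>_def e_def by simp
qed

lemma second_harmonic_sums:
  assumes N: "5 \<le> N"
  defines "C \<equiv> \<lambda>i. cos (2 * (2 * pi * real i / real N))" and "S \<equiv> \<lambda>i. sin (2 * (2 * pi * real i / real N))"
  shows "(\<Sum>i<N. C i) = 0" "(\<Sum>i<N. S i) = 0" "(\<Sum>i<N. (C i)\<^sup>2) = real N / 2"
    "(\<Sum>i<N. (S i)\<^sup>2) = real N / 2" "(\<Sum>i<N. S i * C i) = 0"
proof -
  define t where "t i = 2 * pi * real i / real N" for i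
  have sums: "(\<Sum>i<N. cos (real k * t i)) = 0" "(\<Sum>i<N. sin (real k * t i)) = 0" if "k \<in> {2, 4}" for k
  proof -
    have "\<not> N dvd k"
      using N that by (auto dest: dvd_imp_le)
    then show "(\<Sum>i<N. cos (real k * t i)) = 0" "(\<Sum>i<N. sin (real k * t i)) = 0"
      using sum_cos_sin_multiple_eq_0[of N k] N unfolding t_def by simp_all
  qed
  show "(\<Sum>i<N. C i) = 0" "(\<Sum>i<N. S i) = 0"
    using sums[of 2] by (simp_all add: C_def S_def t_def)
  have CC: "(C i)\<^sup>2 = 1 / 2 + cos (4 * t i) / 2" for i
    using cos_double_cos[of "2 * t i"] by (simp add: C_def t_def field_simps)
  have SS: "(S i)\<^sup>2 = 1 / 2 - cos (4 * t i) / 2" for i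
    using cos_double_sin[of "2 * t i"] by (simp add: S_def t_def field_simps)
  have SC: "S i * C i = sin (4 * t i) / 2" for i
    using sin_double[of "2 * t i"] by (simp add: C_def S_def t_def)
  show "(\<Sum>i<N. (C i)\<^sup>2) = real N / 2" "(\<Sum>i<N. (S i)\<^sup>2) = real N / 2" "(\<Sum>i<N. S i * C i) = 0"
    unfolding CC SS SC using sums[of 4] by (simp_all add: sum.distrib sum_subtractf flip: sum_divide_distrib)
qed

lemma norm_sq_first_harmonic:
  fixes A B :: "'a::real_inner"
  shows "(norm (cos t *\<^sub>R A + sin t *\<^sub>R B))\<^sup>2
       = (inner A A + inner B B) / 2 + (inner A A - inner B B) / 2 * cos (2 * t) + inner A B * sin (2 * t)"
proof -
  have "(norm (cos t *\<^sub>R A + sin t *\<^sub>R B))\<^sup>2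
      = inner A A * (cos t)\<^sup>2 + inner B B * (sin t)\<^sup>2 + inner A B * (2 * sin t * cos t)"
    unfolding power2_norm_eq_inner
    by (simp add: inner_add_left inner_add_right inner_commute power2_eq_square algebra_simps)
  also have "(cos t)\<^sup>2 = (1 + cos (2 * t)) / 2"
    using cos_double_cos[of t] by (simp add: field_simps)
  also have "(sin t)\<^sup>2 = (1 - cos (2 * t)) / 2"
    using cos_double_sin[of t] by (simp add: field_simps)
  also have "2 * sin t * cos t = sin (2 * t)"
    by (simp add: sin_double)
  finally show ?thesis
    by (simp add: field_simps)
qed

lemma first_harmonic_norm_const_imp_orthogonal:
  fixes A B :: "'a::real_inner"
  assumes N: "5 \<le> N"
    and norm: "\<And>i. i < N \<Longrightarrow> norm (cos (2 * pi * real i / real N) *\<^sub>R A + sin (2 * pi * real i / real N) *\<^sub>R B) = l"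
  shows "inner A B = 0" "norm A = l" "norm B = l"
proof -
  define C where "C i = cos (2 * (2 * pi * real i / real N))" for i
  define S where "S i = sin (2 * (2 * pi * real i / real N))" for i
  define a where "a = inner A A"
  define b where "b = inner B B"
  define w where "w = inner A B"
  note sums = second_harmonic_sums[OF N, folded C_def S_def]
  have expand: "l\<^sup>2 = (a + b) / 2 + (a - b) / 2 * C i + w * S i" if "i < N" for i
    using norm_sq_first_harmonic[of "2 * pi * real i / real N" A B] norm[OF that]
    by (simp add: a_def b_def w_def C_def S_def)
  have "(\<Sum>i<N. l\<^sup>2 * C i)
      = (\<Sum>i<N. (a + b) / 2 * C i + (a - b) / 2 * (C i)\<^sup>2 + w * (S i * C i))"
    by (intro sum.cong refl) (simp only: lessThan_iff expand, simp add: power2_eq_square algebra_simps)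
  also have "\<dots> = (a + b) / 2 * (\<Sum>i<N. C i) + (a - b) / 2 * (\<Sum>i<N. (C i)\<^sup>2) + w * (\<Sum>i<N. S i * C i)"
    by (simp add: sum.distrib sum_distrib_left)
  also have "\<dots> = (a - b) / 2 * (real N / 2)"
    using sums by simp
  finally have "a = b"
    using sums(1) N by (simp flip: sum_distrib_left)
  have "(\<Sum>i<N. l\<^sup>2 * S i)
      = (\<Sum>i<N. (a + b) / 2 * S i + (a - b) / 2 * (S i * C i) + w * (S i)\<^sup>2)"
    by (intro sum.cong refl) (simp only: lessThan_iff expand, simp add: power2_eq_square algebra_simps)
  also have "\<dots> = (a + b) / 2 * (\<Sum>i<N. S i) + (a - b) / 2 * (\<Sum>i<N. S i * C i) + w * (\<Sum>i<N. (S i)\<^sup>2)"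
    by (simp add: sum.distrib sum_distrib_left)
  also have "\<dots> = w * (real N / 2)"
    using sums by simp
  finally have "w = 0"
    using sums(2) N by (simp flip: sum_distrib_left)
  then show "inner A B = 0"
    by (simp add: w_def)
  show "norm A = l"
    using norm[of 0] N by simp
  then show "norm B = l"
    using \<open>a = b\<close> by (simp add: a_def b_def norm_eq_sqrt_inner)
qed

text \<open>For N = 4 the frequencies 2 and -2 coincide, so constant edge length only yields a rhombus;
  equal diagonals make it a square.\<close>

lemma first_harmonic_quadrilateral_orthogonal:
  fixes y :: "nat \<Rightarrow> 'a::real_inner"
  assumes edges: "\<And>i. i < 4 \<Longrightarrow>
      y ((i + 1) mod 4) - y i = cos (2 * pi * real i / 4) *\<^sub>R A + sin (2 * pi * real i / 4) *\<^sub>R B"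
    and sides: "\<And>i. i < 4 \<Longrightarrow> norm (y ((i + 1) mod 4) - y i) = l"
    and diagonals: "dist (y 0) (y 2) = dist (y 1) (y 3)"
  shows "inner A B = 0" "norm A = l" "norm B = l"
proof -
  have idx: "(0 + 1) mod 4 = (1::nat)" "(1 + 1) mod 4 = (2::nat)" "(2 + 1) mod 4 = (3::nat)"
    by simp_all
  have angles: "2 * pi * real (0::nat) / 4 = 0" "2 * pi * real (1::nat) / 4 = pi / 2"
    "2 * pi * real (2::nat) / 4 = pi"
    by simp_all
  have e: "y 1 - y 0 = A" "y 2 - y 1 = B" "y 3 - y 2 = - A"
    using edges[of 0, unfolded idx angles] edges[of 1, unfolded idx angles]
      edges[of 2, unfolded idx angles] by simp_all
  then show "norm A = l" "norm B = l"
    using sides[of 0, unfolded idx] sides[of 1, unfolded idx] by simp_all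
  have "y 2 - y 0 = (y 2 - y 1) + (y 1 - y 0)" "y 3 - y 1 = (y 3 - y 2) + (y 2 - y 1)"
    by simp_all
  then have "y 2 - y 0 = A + B" "y 3 - y 1 = B - A"
    unfolding e by (simp_all add: algebra_simps)
  then have "norm (A + B) = norm (B - A)"
    using diagonals by (metis dist_commute dist_norm)
  then have "(norm (A + B))\<^sup>2 = (norm (B - A))\<^sup>2"
    by simp
  then show "inner A B = 0"
    unfolding power2_norm_eq_inner
    by (simp add: inner_add_left inner_add_right inner_diff_left inner_diff_right inner_commute)
qed

lemma inner_combination_orthogonal:
  fixes A B :: "'a::real_inner"
  assumes "inner A B = 0" "norm A = l" "norm B = l"
  shows "inner (a *\<^sub>R A + b *\<^sub>R B) (c *\<^sub>R A + d *\<^sub>R B) = (a * c + b * d) * l\<^sup>2"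
proof -
  have "inner A A = l\<^sup>2" "inner B B = l\<^sup>2" "inner B A = 0"
    using assms by (simp_all add: power2_norm_eq_inner[symmetric] inner_commute)
  then show ?thesis
    using assms(1) by (simp add: inner_add_left inner_add_right algebra_simps)
qed

lemma circle_chord_rotation:
  fixes A B :: "'a::real_vector"
  assumes "2 * r * sin h = l" "l \<noteq> 0"
  shows "r *\<^sub>R ((cos (t + 2 * h) - cos t) *\<^sub>R ((- sin h / l) *\<^sub>R A + (- cos h / l) *\<^sub>R B)
               + (sin (t + 2 * h) - sin t) *\<^sub>R ((cos h / l) *\<^sub>R A + (- sin h / l) *\<^sub>R B))
       = cos t *\<^sub>R A + sin t *\<^sub>R B"
proof -
  have half: "(t + 2 * h + t) / 2 = t + h" "(t - (t + 2 * h)) / 2 = - h" "(t + 2 * h - t) / 2 = h"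
    by simp_all
  have cos_chord: "r * (cos (t + 2 * h) - cos t) = - l * sin (t + h)"
    unfolding cos_diff_cos half using assms(1) by (simp add: algebra_simps)
  have sin_chord: "r * (sin (t + 2 * h) - sin t) = l * cos (t + h)"
    unfolding sin_diff_sin half using assms(1) by (simp add: algebra_simps)
  have combine: "r *\<^sub>R (\<alpha> *\<^sub>R (a1 *\<^sub>R A + b1 *\<^sub>R B) + \<beta> *\<^sub>R (a2 *\<^sub>R A + b2 *\<^sub>R B))
      = ((r * \<alpha>) * a1 + (r * \<beta>) * a2) *\<^sub>R A + ((r * \<alpha>) * b1 + (r * \<beta>) * b2) *\<^sub>R B"
    for \<alpha> \<beta> a1 a2 b1 b2
    by (simp add: scaleR_add_right scaleR_add_left algebra_simps)
  have "r *\<^sub>R ((cos (t + 2 * h) - cos t) *\<^sub>R ((- sin h / l) *\<^sub>R A + (- cos h / l) *\<^sub>R B)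
               + (sin (t + 2 * h) - sin t) *\<^sub>R ((cos h / l) *\<^sub>R A + (- sin h / l) *\<^sub>R B))
      = (sin (t + h) * sin h + cos (t + h) * cos h) *\<^sub>R A
        + (sin (t + h) * cos h - cos (t + h) * sin h) *\<^sub>R B"
    unfolding combine cos_chord sin_chord using assms(2) by (simp add: field_simps)
  also have "\<dots> = cos t *\<^sub>R A + sin t *\<^sub>R B"
    using cos_diff[of "t + h" h] sin_diff[of "t + h" h] by (simp add: mult.commute)
  finally show ?thesis .
qed

lemma regular_polygon_of_first_harmonic_edges:
  fixes y :: "nat \<Rightarrow> real^'d"
  assumes N: "2 \<le> N" and l: "0 < l" and AB: "inner A B = 0" "norm A = l" "norm B = l"
    and edges: "\<And>i. Suc i < N \<Longrightarrow>
        y (Suc i) - y i = cos (2 * pi * real i / real N) *\<^sub>R A + sin (2 * pi * real i / real N) *\<^sub>R B"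
  shows "regular_polygon N l y"
proof -
  define h where "h = pi / real N"
  define r where "r = l / (2 * sin h)"
  \<comment> \<open>\<open>u\<close> and \<open>v\<close> are \<open>A / l\<close> and \<open>B / l\<close> rotated by \<open>\<pi> / 2 + h\<close>; with them the chords
    of the circle of radius \<open>r\<close> are exactly the prescribed edges.\<close>
  define u where "u = (- sin h / l) *\<^sub>R A + (- cos h / l) *\<^sub>R B"
  define v where "v = (cos h / l) *\<^sub>R A + (- sin h / l) *\<^sub>R B"
  define \<theta> where "\<theta> i = 2 * pi * real i / real N" for i
  have "0 < sin h"
    using N by (auto simp: h_def field_simps intro!: sin_gt_zero)
  then have r: "2 * r * sin h = l"
    by (simp add: r_def)
  have "inner u u = 1" "inner v v = 1" "inner u v = 0"
    unfolding u_def v_def inner_combination_orthogonal[OF AB] using l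
    by (simp_all add: power2_eq_square field_simps flip: power2_eq_square)
  then have uv: "norm u = 1" "norm v = 1" "inner u v = 0"
    by (simp_all add: norm_eq_sqrt_inner)
  define c where "c = y 0 - r *\<^sub>R u"
  have "y i = c + r *\<^sub>R (cos (\<theta> i) *\<^sub>R u + sin (\<theta> i) *\<^sub>R v)" if "i < N" for i
    using that
  proof (induction i)
    case (Suc i)
    have "\<theta> (Suc i) = \<theta> i + 2 * h"
      using N by (simp add: \<theta>_def h_def field_simps)
    moreover have edge: "y (Suc i) - y i = cos (\<theta> i) *\<^sub>R A + sin (\<theta> i) *\<^sub>R B"
      using edges[OF Suc.prems] by (simp add: \<theta>_def)
    ultimately have chord: "r *\<^sub>R ((cos (\<theta> (Suc i)) - cos (\<theta> i)) *\<^sub>R u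
                              + (sin (\<theta> (Suc i)) - sin (\<theta> i)) *\<^sub>R v) = y (Suc i) - y i"
      unfolding u_def v_def using circle_chord_rotation[OF r, of "\<theta> i" A B] l by simp
    have "y (Suc i) = y i + (y (Suc i) - y i)"
      by simp
    also have "\<dots> = c + r *\<^sub>R (cos (\<theta> (Suc i)) *\<^sub>R u + sin (\<theta> (Suc i)) *\<^sub>R v)"
      unfolding chord[symmetric] using Suc by (simp add: algebra_simps)
    finally show ?case .
  qed (simp add: c_def \<theta>_def)
  then show ?thesis
    unfolding regular_polygon_def using uv by (auto simp: r_def h_def \<theta>_def)
qed

lemma max_diag_sum_imp_regular_polygon:
  fixes y :: "nat \<Rightarrow> real^'d"
  assumes N: "4 \<le> N" and m: "2 \<le> m" "2 * m \<le> N" and l: "0 < l"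
    and y: "equilateral_polygon N l y"
    and max: "real N * l * diagonal_ratio N m \<le> diag_sum N m y"
  shows "regular_polygon N l y"
proof -
  define \<theta> where "\<theta> i = 2 * pi * real i / real N" for i
  obtain A B where edges: "\<And>i. i < N \<Longrightarrow> y ((i + 1) mod N) - y i = cos (\<theta> i) *\<^sub>R A + sin (\<theta> i) *\<^sub>R B"
    using max_diag_sum_imp_first_harmonic_edges(2)[OF m _ y max] l unfolding \<theta>_def by auto
  have diagonal: "\<And>i. i < N \<Longrightarrow> dist (y i) (y ((i + m) mod N)) = l * diagonal_ratio N m"
    using max_diag_sum_imp_first_harmonic_edges(1)[OF m _ y max] l by auto
  have sides: "norm (y ((i + 1) mod N) - y i) = l" if "i < N" for i
    using y that unfolding equilateral_polygon_def by (metis dist_commute dist_norm)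
  have AB: "inner A B = 0 \<and> norm A = l \<and> norm B = l"
  proof (cases "5 \<le> N")
    case True
    then show ?thesis
      using first_harmonic_norm_const_imp_orthogonal[of N A B l] sides edges by (simp add: \<theta>_def)
  next
    case False
    then have "N = 4" "m = 2"
      using N m by auto
    then have idx: "(0 + m) mod N = 2" "(1 + m) mod N = 3"
      by simp_all
    have "dist (y 0) (y 2) = dist (y 1) (y 3)"
      using diagonal[of 0, unfolded idx] diagonal[of 1, unfolded idx] \<open>N = 4\<close> by simp
    moreover have "y ((i + 1) mod 4) - y i = cos (2 * pi * real i / 4) *\<^sub>R A + sin (2 * pi * real i / 4) *\<^sub>R B"
      "norm (y ((i + 1) mod 4) - y i) = l" if "i < 4" for i
      using edges[of i] sides[of i] that \<open>N = 4\<close> by (simp_all add: \<theta>_def)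
    ultimately show ?thesis
      using first_harmonic_quadrilateral_orthogonal[of y A B l] by simp
  qed
  show ?thesis
  proof (rule regular_polygon_of_first_harmonic_edges[OF _ l AB[THEN conjunct1] AB[THEN conjunct2, THEN conjunct1] AB[THEN conjunct2, THEN conjunct2]])
    show "2 \<le> N"
      using N by simp
    show "y (Suc i) - y i = cos (2 * pi * real i / real N) *\<^sub>R A + sin (2 * pi * real i / real N) *\<^sub>R B"
      if "Suc i < N" for i
      using edges[of i] that by (simp add: \<theta>_def)
  qed
qed

section \<open>Regular polygons\<close>

definition reflect_along :: "'a::real_inner \<Rightarrow> 'a \<Rightarrow> 'a" where
  "reflect_along n x = x - (2 * inner x n / inner n n) *\<^sub>R n"

lemma orthogonal_transformation_reflect_along:
  fixes n :: "'a::real_inner"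
  shows "orthogonal_transformation (reflect_along n)"
  unfolding orthogonal_transformation_def
proof (intro conjI allI)
  show "linear (reflect_along n)"
  proof (rule linearI)
    show "reflect_along n (x + z) = reflect_along n x + reflect_along n z" for x z
      unfolding reflect_along_def
      by (simp add: inner_add_left add_divide_distrib scaleR_add_left algebra_simps)
    show "reflect_along n (a *\<^sub>R x) = a *\<^sub>R reflect_along n x" for a x
      unfolding reflect_along_def by (simp add: algebra_simps)
  qed
  show "inner (reflect_along n v) (reflect_along n w) = inner v w" for v w
    by (cases "inner n n = 0")
       (simp_all add: reflect_along_def inner_diff_left inner_diff_right inner_commute algebra_simps)
qed

lemma reflect_along_swap:
  fixes a b :: "'a::real_inner"
  assumes "norm a = norm b"
  shows "reflect_along (a - b) a = b"
proof (cases "a = b")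
  case False
  have "inner a a = inner b b"
    using assms by (simp add: norm_eq_sqrt_inner)
  then have double: "2 * inner a (a - b) = inner (a - b) (a - b)"
    by (simp add: inner_diff_left inner_diff_right inner_commute)
  have coefficient: "2 * inner a (a - b) / inner (a - b) (a - b) = 1"
    unfolding double using False by simp
  show ?thesis
    unfolding reflect_along_def coefficient by simp
qed (simp add: reflect_along_def)

lemma reflect_along_orthogonal: "inner x n = 0 \<Longrightarrow> reflect_along n x = x"
  by (simp add: reflect_along_def)

lemma orthonormal_pair_transformation:
  fixes u v u' v' :: "'a::real_inner"
  assumes "norm u = 1" "norm v = 1" "inner u v = 0"
    and "norm u' = 1" "norm v' = 1" "inner u' v' = 0"
  obtains g where "orthogonal_transformation g" "g u' = u" "g v' = v"
proof
  define R where "R = reflect_along (u' - u)"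
  define w where "w = R v'"
  have R: "orthogonal_transformation R"
    unfolding R_def by (rule orthogonal_transformation_reflect_along)
  have Ru: "R u' = u"
    unfolding R_def using assms by (intro reflect_along_swap) simp
  have "norm w = 1"
    using R assms unfolding w_def orthogonal_transformation by simp
  have "inner u w = 0"
    using R assms unfolding w_def Ru[symmetric] orthogonal_transformation_def by simp
  show "orthogonal_transformation (reflect_along (w - v) \<circ> R)"
    using R by (intro orthogonal_transformation_compose orthogonal_transformation_reflect_along)
  show "(reflect_along (w - v) \<circ> R) u' = u"
    using \<open>inner u w = 0\<close> assms(3) by (simp add: Ru reflect_along_orthogonal inner_diff_right inner_commute)
  show "(reflect_along (w - v) \<circ> R) v' = v"
    using \<open>norm w = 1\<close> assms(2) by (simp add: w_def[symmetric] reflect_along_swap)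
qed

lemma regular_polygons_congruent:
  fixes y Q :: "nat \<Rightarrow> real^'d"
  assumes "regular_polygon N l y" "regular_polygon N l Q"
  shows "\<exists>f. euclidean_transformation f \<and> (\<forall>i<N. y i = f (Q i))"
proof -
  obtain c u v where uv: "norm u = 1" "norm v = 1" "inner u v = 0"
    and y: "\<forall>i<N. y i = c + (l / (2 * sin (pi / real N))) *\<^sub>R
                   (cos (2 * pi * real i / real N) *\<^sub>R u + sin (2 * pi * real i / real N) *\<^sub>R v)"
    using assms(1) unfolding regular_polygon_def by blast
  obtain c' u' v' where uv': "norm u' = 1" "norm v' = 1" "inner u' v' = 0"
    and Q: "\<forall>i<N. Q i = c' + (l / (2 * sin (pi / real N))) *\<^sub>R
                   (cos (2 * pi * real i / real N) *\<^sub>R u' + sin (2 * pi * real i / real N) *\<^sub>R v')"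
    using assms(2) unfolding regular_polygon_def by blast
  obtain g where g: "orthogonal_transformation g" "g u' = u" "g v' = v"
    using orthonormal_pair_transformation[OF uv uv'] .
  have "linear g"
    using g(1) by (rule orthogonal_transformation_linear)
  show ?thesis
  proof (intro exI conjI allI impI)
    show "euclidean_transformation (\<lambda>x. c + g (x - c'))"
      using g(1) by (simp add: euclidean_transformation_def dist_norm orthogonal_transformation
          flip: linear_diff[OF \<open>linear g\<close>])
    fix i assume "i < N"
    have "g (r *\<^sub>R (a *\<^sub>R u' + b *\<^sub>R v')) = r *\<^sub>R (a *\<^sub>R u + b *\<^sub>R v)" for r a b
      using g by (simp add: linear_add[OF \<open>linear g\<close>] orthogonal_transformation_scaleR)
    then show "y i = c + g (Q i - c')"
      using y Q \<open>i < N\<close> by simp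
  qed
qed

lemma dist_points_on_circle:
  fixes u v :: "'a::real_inner"
  assumes "norm u = 1" "norm v = 1" "inner u v = 0"
  shows "dist (c + r *\<^sub>R (cos a *\<^sub>R u + sin a *\<^sub>R v)) (c + r *\<^sub>R (cos b *\<^sub>R u + sin b *\<^sub>R v))
       = 2 * \<bar>r\<bar> * \<bar>sin ((a - b) / 2)\<bar>"
proof -
  define w where "w = (cos a - cos b) *\<^sub>R u + (sin a - sin b) *\<^sub>R v"
  have "(norm w)\<^sup>2 = 2 - 2 * cos (a - b)"
    unfolding w_def power2_norm_eq_inner inner_combination_orthogonal[OF assms(3,1,2)]
    by (simp add: power2_diff cos_diff algebra_simps)
  also have "cos (a - b) = 1 - 2 * (sin ((a - b) / 2))\<^sup>2"
    using cos_double_sin[of "(a - b) / 2"] by (simp only: mult_2 field_sum_of_halves)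
  also have "2 - 2 * (1 - 2 * (sin ((a - b) / 2))\<^sup>2) = (2 * \<bar>sin ((a - b) / 2)\<bar>)\<^sup>2"
    by (simp add: power_mult_distrib)
  finally have "norm w = 2 * \<bar>sin ((a - b) / 2)\<bar>"
    using power2_eq_iff_nonneg[of "norm w" "2 * \<bar>sin ((a - b) / 2)\<bar>"] by simp
  moreover have "(c + r *\<^sub>R (cos a *\<^sub>R u + sin a *\<^sub>R v)) - (c + r *\<^sub>R (cos b *\<^sub>R u + sin b *\<^sub>R v)) = r *\<^sub>R w"
    by (simp add: w_def algebra_simps)
  ultimately show ?thesis
    by (simp add: dist_norm)
qed

lemma abs_sin_cyclic_offset:
  assumes i: "i < N" and m: "m \<le> N"
  shows "\<bar>sin (pi * (real i - real ((i + m) mod N)) / real N)\<bar> = sin (real m * pi / real N)"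
proof -
  have "0 \<le> sin (real m * pi / real N)"
    using i m by (intro sin_ge_zero) (auto simp: field_simps)
  show ?thesis
  proof (cases "i + m < N")
    case True
    then have "pi * (real i - real ((i + m) mod N)) / real N = - (real m * pi / real N)"
      by (simp add: field_simps)
    then show ?thesis
      using \<open>0 \<le> sin (real m * pi / real N)\<close> by (simp only: sin_minus abs_minus_cancel abs_of_nonneg)
  next
    case False
    then have "(i + m) mod N = i + m - N"
      using i m by (simp add: mod_if)
    then have "pi * (real i - real ((i + m) mod N)) / real N = pi - real m * pi / real N"
      using False i by (simp add: of_nat_diff field_simps)
    then show ?thesis
      using \<open>0 \<le> sin (real m * pi / real N)\<close> by (simp only: sin_pi_minus abs_of_nonneg)
  qed
qed

lemma diag_sum_regular_polygon:
  fixes Q :: "nat \<Rightarrow> real^'d"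
  assumes N: "2 \<le> N" and m: "m \<le> N" and l: "0 \<le> l" and Q: "regular_polygon N l Q"
  shows "diag_sum N m Q = real N * l * diagonal_ratio N m"
proof -
  define r where "r = l / (2 * sin (pi / real N))"
  define \<theta> where "\<theta> i = 2 * pi * real i / real N" for i
  obtain c u v where uv: "norm u = 1" "norm v = 1" "inner u v = 0"
    and Q_eq: "\<And>i. i < N \<Longrightarrow> Q i = c + r *\<^sub>R (cos (\<theta> i) *\<^sub>R u + sin (\<theta> i) *\<^sub>R v)"
    using Q unfolding regular_polygon_def r_def \<theta>_def by blast
  have "0 < sin (pi / real N)"
    using N by (intro sin_gt_zero) (auto simp: field_simps)
  then have r: "0 \<le> r" "2 * r * sin (pi / real N) = l"
    using l by (simp_all add: r_def)
  have diagonal: "dist (Q i) (Q ((i + m) mod N)) = l * diagonal_ratio N m" if i: "i < N" for i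
  proof -
    define k where "k = (i + m) mod N"
    have "k < N"
      using N by (simp add: k_def)
    have "(\<theta> i - \<theta> k) / 2 = pi * (real i - real k) / real N"
      using N by (simp add: \<theta>_def field_simps)
    then have "\<bar>sin ((\<theta> i - \<theta> k) / 2)\<bar> = sin (real m * pi / real N)"
      using abs_sin_cyclic_offset[OF i m] by (simp add: k_def)
    then have "dist (Q i) (Q k) = 2 * r * sin (real m * pi / real N)"
      using dist_points_on_circle[OF uv, of c r "\<theta> i" "\<theta> k"] Q_eq[OF i] Q_eq[OF \<open>k < N\<close>] r(1)
      by simp
    also have "\<dots> = l * diagonal_ratio N m"
      using r(2) \<open>0 < sin (pi / real N)\<close> by (simp add: diagonal_ratio_def field_simps)
    finally show ?thesis
      by (simp add: k_def)
  qed
  then show ?thesis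
    by (simp add: diag_sum_def)
qed

theorem theorem4p1:
  fixes N m :: nat and l :: real and Q :: "nat \<Rightarrow> real^'d"
  assumes "CARD('d) \<ge> 2" and "N \<ge> 4" and "l > 0"
    and "2 \<le> m" and "m \<le> N div 2"
    and "regular_polygon N l Q"
  shows "\<exists>\<epsilon>>0. \<forall>y :: nat \<Rightarrow> real^'d.
           equilateral_polygon N l y \<and> (\<forall>i<N. dist (y i) (Q i) < \<epsilon>) \<and>
           \<not> (\<exists>f. euclidean_transformation f \<and> (\<forall>i<N. y i = f (Q i)))
           \<longrightarrow> diag_sum N m y < diag_sum N m Q"
proof -
  \<comment> \<open>The dimension hypothesis is implied by the existence of \<open>Q\<close>. The bound below holds for
    all equilateral polygons, so any radius \<open>\<epsilon>\<close> will do.\<close>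
  have m: "2 \<le> m" "2 * m \<le> N"
    using assms(4,5) by auto
  have diag_sum_Q: "diag_sum N m Q = real N * l * diagonal_ratio N m"
    using diag_sum_regular_polygon[OF _ _ _ assms(6)] assms(2,3) m by simp
  have "diag_sum N m y < diag_sum N m Q"
    if "equilateral_polygon N l y" "\<not> (\<exists>f. euclidean_transformation f \<and> (\<forall>i<N. y i = f (Q i)))" for y
    using max_diag_sum_imp_regular_polygon[OF assms(2) m assms(3) that(1)]
      regular_polygons_congruent[OF _ assms(6)] that(2)
    unfolding diag_sum_Q by fastforce
  then show ?thesis
    by (intro exI[of _ 1]) auto
qed

end
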